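(* Let $d\ge 1$, $N\ge 1$, $L\ge 0$ be integers and let $\epsilon>0$, $\alpha>0$, $\sigma>0$, $c\ge 0$ be real numbers. Fix a state $s$ and let $R(s,\cdot):\mathbb{R}^d\to\mathbb{R}$ be differentiable and $c$-Lipschitz with respect to the Euclidean norm, so that $\|\nabla_a R(s,a)\|_2\le c$ for all $a\in\mathbb{R}^d$. Let $k(x,y)=\exp\!\big(-\|x-y\|_2^2/(2\sigma^2)\big)$ be the Gaussian (RBF) kernel on $\mathbb{R}^d$. Let $a_1^{(0)},\dots,a_N^{(0)}\in\mathbb{R}^d$ be arbitrary initial particles (e.g. samples from a reference policy $\mu(\cdot\mid s)$), and define iteratively, for $l=0,1,\dots,L-1$ and $i=1,\dots,N$, $$a_i^{(l+1)} = a_i^{(l)} + \epsilon\,\phi_l\big(a_i^{(l)}\big),\qquad \phi_l(x)=\frac1N\sum_{j=1}^N\Big[k\big(a_j^{(l)},x\big)\,\frac{\nabla_a R\big(s,a_j^{(l)}\big)}{\alpha}+\nabla_{a_j}k\big(a_j^{(l)},x\big)\Big],$$ where $\nabla_{a_j}k(a_j,x)$ denotes the gradient of $k$ with respect to its first argument evaluated at $a_j=a_j^{(l)}$. Let $\pi_N^0=\frac1N\sum_{i=1}^N\delta_{a_i^{(0)}}$ and $\pi_N^L=\frac1N\sum_{i=1}^N\delta_{a_i^{(L)}}$. Then $$\mathrm{MMD}^2\big(\pi_N^0,\pi_N^L\big)\le \frac{2\epsilon L}{\sigma\sqrt e}\left(\frac{c}{\alpha}+\frac{1}{\sigma\sqrt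 e}\right).$$
   Context: For probability measures $P,Q$ on $\mathbb{R}^d$, the squared maximum mean discrepancy with kernel $k$ is $\mathrm{MMD}^2(P,Q)=\mathbb{E}_{x,x'\sim P}k(x,x')+\mathbb{E}_{y,y'\sim Q}k(y,y')-2\,\mathbb{E}_{x\sim P,y\sim Q}k(x,y)$ (with independent draws). For the empirical measures above this equals $\frac{1}{N^2}\sum_{i,j=1}^N\big[k(a_i^{(0)},a_j^{(0)})+k(a_i^{(L)},a_j^{(L)})-2k(a_i^{(0)},a_j^{(L)})\big]$. The kernel bandwidth $\sigma$ is a fixed constant (the same in every iteration). In the paper, $\pi_N^0$ is identified with the reference distribution $\mu$, and $\pi_N^L$ is the "implicit policy" obtained by running $L$ steps of the particle update (Value Gradient Flow). *)

theory Defs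
  imports "HOL-Analysis.Analysis"
begin

definition rbf :: "real \<Rightarrow> 'a::real_normed_vector \<Rightarrow> 'a \<Rightarrow> real" where
  "rbf \<sigma> x y = exp (- (norm (x - y))\<^sup>2 / (2 * \<sigma>\<^sup>2))"

text \<open>Gradient of the RBF kernel with respect to its first argument y, evaluated at (y, x):
  grad_y exp(-|y-x|^2/(2 sigma^2)) = -(y - x)/sigma^2 * k(y,x).\<close>
definition rbf_grad1 :: "real \<Rightarrow> 'a::real_normed_vector \<Rightarrow> 'a \<Rightarrow> 'a" where
  "rbf_grad1 \<sigma> y x = (- rbf \<sigma> y x / \<sigma>\<^sup>2) *\<^sub>R (y - x)"

definition vgf_phi :: "nat \<Rightarrow> real \<Rightarrow> real \<Rightarrow> ('a::real_normed_vector \<Rightarrow> 'a) \<Rightarrow> (nat \<Rightarrow> 'a) \<Rightarrow> 'a \<Rightarrow> 'a" where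
  "vgf_phi N \<sigma> \<alpha> G p x =
     (1 / real N) *\<^sub>R (\<Sum>j<N. (rbf \<sigma> (p j) x / \<alpha>) *\<^sub>R G (p j) + rbf_grad1 \<sigma> (p j) x)"

fun vgf_particles :: "nat \<Rightarrow> real \<Rightarrow> real \<Rightarrow> real \<Rightarrow> ('a::real_normed_vector \<Rightarrow> 'a) \<Rightarrow> (nat \<Rightarrow> 'a) \<Rightarrow> nat \<Rightarrow> nat \<Rightarrow> 'a" where
  "vgf_particles N \<epsilon> \<sigma> \<alpha> G a0 0 = a0"
| "vgf_particles N \<epsilon> \<sigma> \<alpha> G a0 (Suc l) =
     (\<lambda>i. vgf_particles N \<epsilon> \<sigma> \<alpha> G a0 l i
          + \<epsilon> *\<^sub>R vgf_phi N \<sigma> \<alpha> G (vgf_particles N \<epsilon> \<sigma> \<alpha> G a0 l) (vgf_particles N \<epsilon> \<sigma> \<alpha> G a0 l i))"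

definition mmd2_emp :: "real \<Rightarrow> nat \<Rightarrow> (nat \<Rightarrow> 'a::real_normed_vector) \<Rightarrow> (nat \<Rightarrow> 'a) \<Rightarrow> real" where
  "mmd2_emp \<sigma> N x y = (1 / (real N)\<^sup>2) *
     (\<Sum>i<N. \<Sum>j<N. rbf \<sigma> (x i) (x j) + rbf \<sigma> (y i) (y j) - 2 * rbf \<sigma> (x i) (y j))"

end

theory Submission
  imports Defs
begin

text \<open>
  Every particle moves by at most \<open>\<epsilon> \<parallel>\<phi>\<^sub>l\<parallel>\<close> per step, and
  \<open>\<parallel>\<phi>\<^sub>l\<parallel> \<le> c/\<alpha> + 1/(\<sigma>\<surd>e)\<close>: the kernel is bounded by 1, Lipschitz continuity of
  \<open>R\<close> gives \<open>\<parallel>\<nabla>R\<parallel> \<le> c\<close>, and the kernel gradient has norm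
  \<open>r/\<sigma>\<^sup>2 exp(-r\<^sup>2/(2\<sigma>\<^sup>2)) \<le> 1/(\<sigma>\<surd>e)\<close>, the maximum being attained at \<open>r = \<sigma>\<close>.
  Hence after \<open>L\<close> steps each particle is displaced by at most \<open>D = L\<epsilon>(c/\<alpha> + 1/(\<sigma>\<surd>e))\<close>.
  The same bound makes the kernel \<open>1/(\<sigma>\<surd>e)\<close>-Lipschitz in each argument, and by symmetry
  of the kernel the MMD double sum can be rearranged into
  \<open>\<Sum>\<^sub>i\<^sub>,\<^sub>j (k(x\<^sub>i,x\<^sub>j) - k(x\<^sub>i,y\<^sub>j)) + (k(y\<^sub>i,y\<^sub>j) - k(y\<^sub>i,x\<^sub>j))\<close>,
  each term of which is at most \<open>2D/(\<sigma>\<surd>e)\<close>.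
\<close>

lemma has_derivative_abs_le_lipschitz:
  fixes f :: "'a::real_normed_vector \<Rightarrow> real"
  assumes deriv: "(f has_derivative f') (at a)" and lip: "C-lipschitz_on UNIV f"
  shows "\<bar>f' h\<bar> \<le> C * norm h"
proof -
  define g where "g t = f (a + t *\<^sub>R h)" for t :: real
  have "((\<lambda>t. a + t *\<^sub>R h) has_derivative (\<lambda>t. t *\<^sub>R h)) (at 0)"
    by (auto intro!: derivative_eq_intros)
  then have "(g has_derivative (\<lambda>t. f' (t *\<^sub>R h))) (at 0)"
    unfolding g_def using has_derivative_compose deriv by fastforce
  then have "(g has_field_derivative f' h) (at 0)"
    using linear.scaleR[OF has_derivative_linear[OF deriv]]
    by (simp add: has_field_derivative_def mult.commute[of _ "f' h"])
  then have "((\<lambda>t. \<bar>(g t - g 0) / t\<bar>) \<longlongrightarrow> \<bar>f' h\<bar>) (at 0)"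
    unfolding has_field_derivative_iff by (intro tendsto_rabs) simp
  moreover have "\<bar>(g t - g 0) / t\<bar> \<le> C * norm h" for t
  proof -
    have "\<bar>g t - g 0\<bar> \<le> \<bar>t\<bar> * (C * norm h)"
      using lipschitz_on_normD[OF lip, of "a + t *\<^sub>R h" a] by (simp add: g_def mult_ac)
    then show ?thesis
      using lipschitz_on_nonneg[OF lip] by (cases "t = 0") (auto simp: abs_divide field_simps)
  qed
  ultimately show ?thesis
    by (intro tendsto_upperbound) auto
qed

lemma norm_gradient_le_lipschitz:
  fixes f :: "'a::real_inner \<Rightarrow> real"
  assumes "(f has_derivative (\<lambda>h. g \<bullet> h)) (at a)" and lip: "C-lipschitz_on UNIV f"
  shows "norm g \<le> C"
proof -
  have "norm g * norm g \<le> C * norm g"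
    using has_derivative_abs_le_lipschitz[OF assms, of g] by (simp add: dot_square_norm power2_eq_square)
  then show ?thesis
    using lipschitz_on_nonneg[OF lip] by (cases "norm g = 0") auto
qed

lemma exp_minus_half: "exp (- (1 / 2)) = 1 / sqrt (exp 1)"
proof -
  have "sqrt (exp 1) = exp (1 / 2)"
    by (rule real_sqrt_unique) (simp_all add: power2_eq_square exp_add[symmetric])
  then show ?thesis by (simp add: exp_minus inverse_eq_divide)
qed

lemma abs_mult_exp_minus_square_half_le: "\<bar>t::real\<bar> * exp (- t\<^sup>2 / 2) \<le> exp (- (1 / 2))"
proof -
  have "\<bar>t\<bar> \<le> 1 + (t\<^sup>2 - 1) / 2"
    using zero_le_power2[of "\<bar>t\<bar> - 1"] by (simp add: power2_eq_square field_simps)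
  also have "\<dots> \<le> exp ((t\<^sup>2 - 1) / 2)"
    by (rule exp_ge_add_one_self)
  finally have "\<bar>t\<bar> * exp (- t\<^sup>2 / 2) \<le> exp ((t\<^sup>2 - 1) / 2) * exp (- t\<^sup>2 / 2)"
    by (simp add: mult_right_mono)
  also have "\<dots> = exp (- (1 / 2))"
    by (simp add: exp_add[symmetric] diff_divide_distrib)
  finally show ?thesis .
qed

lemma gaussian_deriv_le:
  assumes "\<sigma> > 0"
  shows "\<bar>r\<bar> / \<sigma>\<^sup>2 * exp (- r\<^sup>2 / (2 * \<sigma>\<^sup>2)) \<le> 1 / (\<sigma> * sqrt (exp 1))"
proof -
  have "\<bar>r\<bar> / \<sigma>\<^sup>2 * exp (- r\<^sup>2 / (2 * \<sigma>\<^sup>2)) = \<bar>r / \<sigma>\<bar> * exp (- (r / \<sigma>)\<^sup>2 / 2) / \<sigma>"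
    using assms by (simp add: power2_eq_square power_divide abs_divide)
  also have "\<dots> \<le> exp (- (1 / 2)) / \<sigma>"
    using assms by (intro divide_right_mono abs_mult_exp_minus_square_half_le) simp
  also have "\<dots> = 1 / (\<sigma> * sqrt (exp 1))"
    by (simp add: exp_minus_half)
  finally show ?thesis .
qed

lemma gaussian_lipschitz:
  assumes "\<sigma> > 0"
  shows "(1 / (\<sigma> * sqrt (exp 1)))-lipschitz_on UNIV (\<lambda>r::real. exp (- r\<^sup>2 / (2 * \<sigma>\<^sup>2)))"
proof (rule lipschitz_onI)
  fix r s :: real
  have "DERIV (\<lambda>r. exp (- r\<^sup>2 / (2 * \<sigma>\<^sup>2))) x :> - (x / \<sigma>\<^sup>2) * exp (- x\<^sup>2 / (2 * \<sigma>\<^sup>2))" for x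
    using assms by (auto intro!: derivative_eq_intros simp: field_simps power2_eq_square)
  moreover have "norm (- (x / \<sigma>\<^sup>2) * exp (- x\<^sup>2 / (2 * \<sigma>\<^sup>2))) \<le> 1 / (\<sigma> * sqrt (exp 1))" for x
    using gaussian_deriv_le[OF assms, of x] by (simp add: abs_mult)
  ultimately show "dist (exp (- r\<^sup>2 / (2 * \<sigma>\<^sup>2))) (exp (- s\<^sup>2 / (2 * \<sigma>\<^sup>2))) \<le> 1 / (\<sigma> * sqrt (exp 1)) * dist r s"
    unfolding dist_norm by (intro field_differentiable_bound[where S = UNIV]) auto
qed (use assms in simp)

lemma rbf_lipschitz:
  assumes "\<sigma> > 0"
  shows "(1 / (\<sigma> * sqrt (exp 1)))-lipschitz_on UNIV (rbf \<sigma> a)"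
proof -
  have "1-lipschitz_on UNIV (\<lambda>x. norm (a - x))"
    by (rule lipschitz_onI) (auto simp: dist_norm norm_minus_commute intro: order_trans[OF norm_triangle_ineq3])
  from lipschitz_on_compose2[OF this lipschitz_on_subset[OF gaussian_lipschitz[OF assms]]]
  show ?thesis
    unfolding rbf_def by simp
qed

lemma norm_rbf_grad1_le:
  assumes "\<sigma> > 0"
  shows "norm (rbf_grad1 \<sigma> y x) \<le> 1 / (\<sigma> * sqrt (exp 1))"
  using gaussian_deriv_le[OF assms, of "norm (y - x)"]
  by (simp add: rbf_grad1_def rbf_def abs_mult mult.commute)

lemma norm_vgf_phi_le:
  fixes G :: "'a::real_normed_vector \<Rightarrow> 'a"
  assumes "N \<ge> 1" and "\<alpha> > 0" and "\<sigma> > 0" and G: "\<And>z. norm (G z) \<le> c"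
  shows "norm (vgf_phi N \<sigma> \<alpha> G p x) \<le> c / \<alpha> + 1 / (\<sigma> * sqrt (exp 1))"
proof -
  let ?B = "c / \<alpha> + 1 / (\<sigma> * sqrt (exp 1))"
  have summand: "norm ((rbf \<sigma> (p j) x / \<alpha>) *\<^sub>R G (p j) + rbf_grad1 \<sigma> (p j) x) \<le> ?B" for j
  proof -
    have "rbf \<sigma> (p j) x / \<alpha> * norm (G (p j)) \<le> 1 / \<alpha> * c"
      using assms G[of "p j"] norm_ge_zero[of "G (p j)"]
      by (intro mult_mono divide_right_mono) (auto simp: rbf_def)
    then have "norm ((rbf \<sigma> (p j) x / \<alpha>) *\<^sub>R G (p j)) \<le> c / \<alpha>"
      using \<open>\<alpha> > 0\<close> by (simp add: rbf_def)
    with norm_rbf_grad1_le[OF \<open>\<sigma> > 0\<close>] show ?thesis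
      by (intro norm_triangle_le add_mono)
  qed
  have "norm (vgf_phi N \<sigma> \<alpha> G p x)
      \<le> 1 / real N * (\<Sum>j<N. norm ((rbf \<sigma> (p j) x / \<alpha>) *\<^sub>R G (p j) + rbf_grad1 \<sigma> (p j) x))"
    unfolding vgf_phi_def by (simp add: norm_sum divide_right_mono)
  also have "\<dots> \<le> 1 / real N * (real N * ?B)"
    using sum_bounded_above[where A = "{..<N}", OF summand] by (intro mult_left_mono) simp_all
  also have "\<dots> = ?B"
    using assms by simp
  finally show ?thesis .
qed

lemma norm_vgf_particles_diff_le:
  fixes G :: "'a::real_normed_vector \<Rightarrow> 'a"
  assumes "N \<ge> 1" and "\<epsilon> \<ge> 0" and "\<alpha> > 0" and "\<sigma> > 0" and "\<And>z. norm (G z) \<le> c"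
  shows "norm (vgf_particles N \<epsilon> \<sigma> \<alpha> G a0 L i - a0 i)
    \<le> real L * \<epsilon> * (c / \<alpha> + 1 / (\<sigma> * sqrt (exp 1)))"
proof (induction L)
  case 0
  then show ?case by simp
next
  case (Suc L)
  let ?a = "vgf_particles N \<epsilon> \<sigma> \<alpha> G a0 L" and ?B = "c / \<alpha> + 1 / (\<sigma> * sqrt (exp 1))"
  have step: "norm (\<epsilon> *\<^sub>R vgf_phi N \<sigma> \<alpha> G ?a (?a i)) \<le> \<epsilon> * ?B"
    using norm_vgf_phi_le[OF assms(1,3-5)] \<open>\<epsilon> \<ge> 0\<close> by (simp add: mult_left_mono)
  have "norm (vgf_particles N \<epsilon> \<sigma> \<alpha> G a0 (Suc L) i - a0 i)
      = norm ((?a i - a0 i) + \<epsilon> *\<^sub>R vgf_phi N \<sigma> \<alpha> G ?a (?a i))"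
    by (simp add: algebra_simps)
  also have "\<dots> \<le> norm (?a i - a0 i) + norm (\<epsilon> *\<^sub>R vgf_phi N \<sigma> \<alpha> G ?a (?a i))"
    by (rule norm_triangle_ineq)
  also have "\<dots> \<le> real L * \<epsilon> * ?B + \<epsilon> * ?B"
    using Suc.IH step by (rule add_mono)
  also have "\<dots> = real (Suc L) * \<epsilon> * ?B"
    by (simp add: distrib_right)
  finally show ?case .
qed

lemma mmd2_emp_le_displacement:
  assumes "\<sigma> > 0" and "N \<ge> 1" and displacement: "\<And>j. j < N \<Longrightarrow> norm (x j - y j) \<le> D"
  shows "mmd2_emp \<sigma> N x y \<le> 2 * D / (\<sigma> * sqrt (exp 1))"
proof -
  let ?k = "rbf \<sigma>" and ?K = "1 / (\<sigma> * sqrt (exp 1))"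
  have cross: "(\<Sum>i<N. \<Sum>j<N. ?k (x i) (y j)) = (\<Sum>i<N. \<Sum>j<N. ?k (y i) (x j))"
    by (subst sum.swap) (simp add: rbf_def norm_minus_commute)
  have lip: "\<bar>?k a u - ?k a v\<bar> \<le> ?K * norm (u - v)" for a u v
    using lipschitz_on_normD[OF rbf_lipschitz[OF \<open>\<sigma> > 0\<close>]] by simp
  have "(\<Sum>i<N. \<Sum>j<N. ?k (x i) (x j) + ?k (y i) (y j) - 2 * ?k (x i) (y j))
      = (\<Sum>i<N. \<Sum>j<N. ?k (x i) (x j) + ?k (y i) (y j)) - 2 * (\<Sum>i<N. \<Sum>j<N. ?k (x i) (y j))"
    by (simp add: sum_subtractf sum_distrib_left)
  also have "\<dots> = (\<Sum>i<N. \<Sum>j<N. (?k (x i) (x j) - ?k (x i) (y j)) + (?k (y i) (y j) - ?k (y i) (x j)))"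
    using cross by (simp add: sum_subtractf sum.distrib)
  also have "\<dots> \<le> (\<Sum>i<N. \<Sum>j<N. 2 * (?K * D))"
  proof (intro sum_mono)
    fix i j assume "j \<in> {..<N}"
    then have "?K * norm (x j - y j) \<le> ?K * D"
      using displacement \<open>\<sigma> > 0\<close> by (intro mult_left_mono) auto
    then show "(?k (x i) (x j) - ?k (x i) (y j)) + (?k (y i) (y j) - ?k (y i) (x j)) \<le> 2 * (?K * D)"
      using lip[of "x i" "x j" "y j"] lip[of "y i" "y j" "x j"] by (simp add: norm_minus_commute)
  qed
  also have "\<dots> = (real N)\<^sup>2 * (2 * (?K * D))"
    by (simp add: power2_eq_square)
  finally show ?thesis
    using \<open>N \<ge> 1\<close> by (simp add: mmd2_emp_def field_simps)
qed

theorem theorem1: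
  fixes R :: "real ^ 'd \<Rightarrow> real" and G :: "real ^ 'd \<Rightarrow> real ^ 'd"
    and a0 :: "nat \<Rightarrow> real ^ 'd"
    and N L :: nat and \<epsilon> \<alpha> \<sigma> c :: real
  assumes "N \<ge> 1" and "\<epsilon> > 0" and "\<alpha> > 0" and "\<sigma> > 0" and "c \<ge> 0"
    and "\<And>a. (R has_derivative (\<lambda>h. G a \<bullet> h)) (at a)"
    and "c-lipschitz_on UNIV R"
  shows "mmd2_emp \<sigma> N a0 (vgf_particles N \<epsilon> \<sigma> \<alpha> G a0 L)
         \<le> 2 * \<epsilon> * real L / (\<sigma> * sqrt (exp 1)) * (c / \<alpha> + 1 / (\<sigma> * sqrt (exp 1)))"
proof -
  have "norm (G a) \<le> c" for a
    using norm_gradient_le_lipschitz assms(6,7) .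
  then have "norm (a0 j - vgf_particles N \<epsilon> \<sigma> \<alpha> G a0 L j)
      \<le> real L * \<epsilon> * (c / \<alpha> + 1 / (\<sigma> * sqrt (exp 1)))" for j
    using norm_vgf_particles_diff_le[of N \<epsilon> \<alpha> \<sigma> G c a0 L j] assms(1-4)
    by (simp add: norm_minus_commute)
  from mmd2_emp_le_displacement[OF \<open>\<sigma> > 0\<close> \<open>N \<ge> 1\<close> this]
  show ?thesis
    by (simp add: mult_ac)
qed

end
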